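(* Assume $\omega$ satisfies $\omega(x)/\mathrm{tr}\,\omega(x)\ge2\kappa I$ for all $x\in\mathbb Z^d$, with $\kappa\in(0,\frac1{2d}]$. Let $\theta=\frac1{4\kappa}$ (so $\theta\ge d/2$) and $\eta(y)=(1+|y|^2)^{-\theta}$ for $y\in\mathbb R^d$. There exists a constant $C_0=C_0(d,\kappa)>0$ such that for all $x\in\mathbb Z^d$, $$L_\omega\eta(x)\ge-\mathbb 1_{x\in B_{C_0\theta^2}}.$$
   Context: $\omega:\mathbb Z^d\to\{$positive-definite diagonal matrices$\}$, $\omega(x)=\mathrm{diag}[\omega_1(x),\dots,\omega_d(x)]$. $L_\omega u(x)=\sum_{i=1}^d\frac{\omega_i(x)}{2\mathrm{tr}\,\omega(x)}[u(x+e_i)+u(x-e_i)-2u(x)]$. $B_r=\{x\in\mathbb Z^d:|x|<r\}$. *)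

theory Defs
  imports "HOL-Analysis.Analysis"
begin

text \<open>Lattice points of Z^d are modelled as int ^ 'n, with d = CARD('n).
  The environment omega is given by its diagonal entries: omega x i = omega_i(x).\<close>

definition unit_vec :: "'n::finite \<Rightarrow> int ^ 'n" where
  "unit_vec i = (\<chi> j. if j = i then 1 else 0)"

definition real_of_lattice :: "int ^ 'n::finite \<Rightarrow> real ^ 'n" where
  "real_of_lattice x = (\<chi> j. real_of_int (x $ j))"

definition trace_env :: "(int ^ 'n::finite \<Rightarrow> 'n \<Rightarrow> real) \<Rightarrow> int ^ 'n \<Rightarrow> real" where
  "trace_env \<omega> x = (\<Sum>i\<in>UNIV. \<omega> x i)"

definition L_op :: "(int ^ 'n::finite \<Rightarrow> 'n \<Rightarrow> real) \<Rightarrow> (int ^ 'n \<Rightarrow> real) \<Rightarrow> int ^ 'n \<Rightarrow> real" where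
  "L_op \<omega> u x = (\<Sum>i\<in>UNIV. \<omega> x i / (2 * trace_env \<omega> x) *
      (u (x + unit_vec i) + u (x - unit_vec i) - 2 * u x))"

definition ball_lattice :: "real \<Rightarrow> (int ^ 'n::finite) set" where
  "ball_lattice r = {x. norm (real_of_lattice x) < r}"

end

theory Submission
  imports Defs
begin

text \<open>Write Q = 1 + |x|^2, so that \<eta>(x) = Q^(-\<theta>) and the neighbours x \<plusminus> e_i have
  1 + |x \<plusminus> e_i|^2 = Q + 1 \<plusminus> 2 x_i. Expanding t^(-\<theta>) at Q to third order (the fourth order
  remainder is nonnegative) bounds each second difference from below by
  Q^(-\<theta>) (-2\<theta>/Q + O(\<theta>^2/Q^2) + 4\<theta>(\<theta>+1)(Q-\<theta>-2) x_i^2/Q^3).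
  The weights of L_\<omega> sum to 1/2 and are at least \<kappa> = 1/(4\<theta>), so averaging turns the x_i^2 terms
  into at least (\<theta>+1)(Q-\<theta>-2)(Q-1)/Q^3, roughly (\<theta>+1)/Q, which beats -\<theta>/Q once Q \<ge> (\<theta>+3)^2.
  Inside the ball of radius \<theta>+3 only 0 \<le> \<eta> \<le> 1 is used, giving L_\<omega> \<eta> \<ge> -1; hence
  the constant C0 = (\<theta>+3)/\<theta>^2 works.\<close>

lemma powr_neg_ge_third_order_taylor:
  fixes Q h \<theta> :: real
  assumes "0 < Q" and "0 < Q + h" and "0 < \<theta>"
  shows "Q powr -\<theta> * (1 - \<theta> * h / Q + \<theta> * (\<theta> + 1) * h\<^sup>2 / (2 * Q\<^sup>2)
            - \<theta> * (\<theta> + 1) * (\<theta> + 2) * h ^ 3 / (6 * Q ^ 3))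
         \<le> (Q + h) powr -\<theta>"
proof (cases "h = 0")
  case True
  then show ?thesis by simp
next
  case False
  define df where "df m t = (\<Prod>j<m. - \<theta> - real j) * t powr (- \<theta> - real m)" for m t
  have df_deriv: "DERIV (df m) t :> df (Suc m) t" if "0 < t" for m t
  proof -
    have "DERIV (df m) t :> (\<Prod>j<m. - \<theta> - real j) * ((- \<theta> - real m) * t powr (- \<theta> - real m - 1))"
      unfolding df_def by (intro DERIV_cmult has_real_derivative_powr that)
    then show ?thesis
      unfolding df_def by (simp add: algebra_simps)
  qed
  obtain t where taylor: "(Q + h) powr -\<theta> = (\<Sum>m<4. df m Q / fact m * h ^ m) + df 4 t / fact 4 * h ^ 4"
    using Taylor[of 4 df "\<lambda>t. t powr -\<theta>" "min Q (Q + h)" "max Q (Q + h)" Q "Q + h"]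
      df_deriv assms False by (fastforce simp: df_def split: if_splits)
  have "(\<Prod>j<4. - \<theta> - real j) = \<theta> * (\<theta> + 1) * (\<theta> + 2) * (\<theta> + 3)"
    by (simp add: numeral_eq_Suc lessThan_Suc algebra_simps)
  then have remainder_nonneg: "0 \<le> df 4 t / fact 4 * h ^ 4"
    using \<open>0 < \<theta>\<close> by (simp add: df_def)
  have Q_powr: "Q powr (- \<theta> - real m) = Q powr -\<theta> / Q ^ m" for m
    using \<open>0 < Q\<close> by (simp add: powr_diff powr_realpow)
  have taylor_polynomial: "(\<Sum>m<4. df m Q / fact m * h ^ m) = Q powr -\<theta> * (1 - \<theta> * h / Q
      + \<theta> * (\<theta> + 1) * h\<^sup>2 / (2 * Q\<^sup>2) - \<theta> * (\<theta> + 1) * (\<theta> + 2) * h ^ 3 / (6 * Q ^ 3))"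
    using \<open>0 < Q\<close> unfolding df_def Q_powr
    by (simp add: numeral_eq_Suc lessThan_Suc fact_numeral) (simp add: field_simps)
  show ?thesis
    using taylor remainder_nonneg taylor_polynomial by linarith
qed

lemma powr_neg_second_difference_ge:
  fixes Q s \<theta> :: real
  assumes "0 < Q" and "0 < Q + 1 + 2 * s" and "0 < Q + 1 - 2 * s" and "0 < \<theta>"
  shows "Q powr -\<theta> * ((- 2 * \<theta> / Q + \<theta> * (\<theta> + 1) / Q\<^sup>2 - \<theta> * (\<theta> + 1) * (\<theta> + 2) / (3 * Q ^ 3))
            + 4 * \<theta> * (\<theta> + 1) * (Q - \<theta> - 2) / Q ^ 3 * s\<^sup>2)
         \<le> (Q + 1 + 2 * s) powr -\<theta> + (Q + 1 - 2 * s) powr -\<theta> - 2 * Q powr -\<theta>"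
proof -
  define T where "T h = Q powr -\<theta> * (1 - \<theta> * h / Q + \<theta> * (\<theta> + 1) * h\<^sup>2 / (2 * Q\<^sup>2)
    - \<theta> * (\<theta> + 1) * (\<theta> + 2) * h ^ 3 / (6 * Q ^ 3))" for h
  have "T (1 + 2 * s) \<le> (Q + 1 + 2 * s) powr -\<theta>" "T (1 - 2 * s) \<le> (Q + 1 - 2 * s) powr -\<theta>"
    using powr_neg_ge_third_order_taylor[of Q "1 + 2 * s" \<theta>]
      powr_neg_ge_third_order_taylor[of Q "1 - 2 * s" \<theta>] assms
    by (simp_all add: T_def add.assoc[symmetric] add_diff_eq)
  moreover have "T (1 + 2 * s) + T (1 - 2 * s) - 2 * Q powr -\<theta> =
      Q powr -\<theta> * ((- 2 * \<theta> / Q + \<theta> * (\<theta> + 1) / Q\<^sup>2 - \<theta> * (\<theta> + 1) * (\<theta> + 2) / (3 * Q ^ 3))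
        + 4 * \<theta> * (\<theta> + 1) * (Q - \<theta> - 2) / Q ^ 3 * s\<^sup>2)"
    using \<open>0 < Q\<close> by (simp add: T_def field_simps power2_eq_square power3_eq_cube)
  ultimately show ?thesis
    by linarith
qed

text \<open>The lower bound of powr_neg_second_difference_ge averaged with total weight 1/2,
  using \<Sum> w_i s_i^2 \<ge> (Q - 1)/(4\<theta>).\<close>

lemma second_difference_bound_average_nonneg:
  fixes Q \<theta> :: real
  assumes "0 < \<theta>" and "(\<theta> + 3)\<^sup>2 \<le> Q"
  shows "0 \<le> (- 2 * \<theta> / Q + \<theta> * (\<theta> + 1) / Q\<^sup>2 - \<theta> * (\<theta> + 1) * (\<theta> + 2) / (3 * Q ^ 3)) / 2
            + 4 * \<theta> * (\<theta> + 1) * (Q - \<theta> - 2) / Q ^ 3 * (Q - 1) / (4 * \<theta>)"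
proof -
  have "0 < (\<theta> + 3)\<^sup>2"
    using assms(1) by simp
  with assms(2) have "0 < Q"
    by linarith
  have "2 * (\<theta> + 3) \<le> Q - (\<theta> + 1) * (\<theta> + 3)"
    using assms(2) by (simp add: power2_eq_square algebra_simps)
  have "\<theta> * (\<theta> + 1) * (\<theta> + 2) / 6 \<le> (\<theta> + 3)\<^sup>2 * (2 * (\<theta> + 3))"
    using \<open>0 < \<theta>\<close> by (simp add: power2_eq_square algebra_simps)
  also have "\<dots> \<le> Q * (2 * (\<theta> + 3))"
    using assms by (intro mult_right_mono) auto
  also have "\<dots> \<le> Q * (Q - (\<theta> + 1) * (\<theta> + 3))"
    using \<open>0 < Q\<close> \<open>2 * (\<theta> + 3) \<le> _\<close> by (intro mult_left_mono) auto
  finally have "0 \<le> Q\<^sup>2 - (\<theta> + 1) * (\<theta> + 3) * Q - \<theta> * (\<theta> + 1) * (\<theta> + 2) / 6"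
    by (simp add: power2_eq_square algebra_simps)
  then have "0 \<le> ((Q\<^sup>2 - (\<theta> + 1) * (\<theta> + 3) * Q - \<theta> * (\<theta> + 1) * (\<theta> + 2) / 6)
      + (\<theta> + 1) * (\<theta> + 2) + \<theta> * (\<theta> + 1) * Q / 2) / Q ^ 3"
    using \<open>0 < \<theta>\<close> \<open>0 < Q\<close> by (intro divide_nonneg_pos) auto
  also have "\<dots> = (- 2 * \<theta> / Q + \<theta> * (\<theta> + 1) / Q\<^sup>2 - \<theta> * (\<theta> + 1) * (\<theta> + 2) / (3 * Q ^ 3)) / 2
      + 4 * \<theta> * (\<theta> + 1) * (Q - \<theta> - 2) / Q ^ 3 * (Q - 1) / (4 * \<theta>)"
    using \<open>0 < \<theta>\<close> \<open>0 < Q\<close> by (simp add: field_simps power2_eq_square power3_eq_cube)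
  finally show ?thesis .
qed

lemma shifted_arguments_pos:
  fixes Q s :: real
  assumes "s\<^sup>2 \<le> Q - 1"
  shows "0 < Q + 1 + 2 * s" and "0 < Q + 1 - 2 * s"
proof -
  have "(s + 1)\<^sup>2 = s\<^sup>2 + 2 * s + 1" and "(s - 1)\<^sup>2 = s\<^sup>2 - 2 * s + 1"
    by (simp_all add: power2_eq_square algebra_simps)
  moreover have "0 \<le> (s + 1)\<^sup>2" and "0 \<le> (s - 1)\<^sup>2"
    by simp_all
  ultimately show "0 < Q + 1 + 2 * s" and "0 < Q + 1 - 2 * s"
    using assms by linarith+
qed

lemma weighted_second_differences_nonneg:
  fixes w s :: "'i \<Rightarrow> real" and Q \<theta> :: real
  assumes "finite I" and "0 < \<theta>"
    and weight_ge: "\<And>i. i \<in> I \<Longrightarrow> 1 / (4 * \<theta>) \<le> w i" and weight_sum: "sum w I = 1 / 2"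
    and Q_eq: "Q = 1 + (\<Sum>i\<in>I. (s i)\<^sup>2)" and Q_ge: "(\<theta> + 3)\<^sup>2 \<le> Q"
  shows "0 \<le> (\<Sum>i\<in>I. w i * ((Q + 1 + 2 * s i) powr -\<theta> + (Q + 1 - 2 * s i) powr -\<theta> - 2 * Q powr -\<theta>))"
    (is "0 \<le> (\<Sum>i\<in>I. w i * ?D i)")
proof -
  define D0 where "D0 = - 2 * \<theta> / Q + \<theta> * (\<theta> + 1) / Q\<^sup>2 - \<theta> * (\<theta> + 1) * (\<theta> + 2) / (3 * Q ^ 3)"
  define c where "c = 4 * \<theta> * (\<theta> + 1) * (Q - \<theta> - 2) / Q ^ 3"
  have "(\<theta> + 3)\<^sup>2 = \<theta> * \<theta> + 6 * \<theta> + 9"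
    by (simp add: power2_eq_square algebra_simps)
  then have "\<theta> + 2 \<le> Q"
    using Q_ge \<open>0 < \<theta>\<close> zero_le_square[of \<theta>] by linarith
  then have "0 < Q" and "0 \<le> c"
    using \<open>0 < \<theta>\<close> by (simp_all add: c_def)
  have "0 < 1 / (4 * \<theta>)"
    using \<open>0 < \<theta>\<close> by simp
  then have w_nonneg: "0 \<le> w i" if "i \<in> I" for i
    using weight_ge[OF that] by linarith
  have neighbours_pos: "0 < Q + 1 + 2 * s i" "0 < Q + 1 - 2 * s i" if "i \<in> I" for i
  proof -
    have "(s i)\<^sup>2 \<le> Q - 1"
      using Q_eq member_le_sum[OF that, of "\<lambda>i. (s i)\<^sup>2"] \<open>finite I\<close> by simp
    then show "0 < Q + 1 + 2 * s i" "0 < Q + 1 - 2 * s i"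
      by (rule shifted_arguments_pos)+
  qed
  have "(Q - 1) / (4 * \<theta>) = (\<Sum>i\<in>I. 1 / (4 * \<theta>) * (s i)\<^sup>2)"
    using Q_eq by (simp add: sum_divide_distrib)
  also have "\<dots> \<le> (\<Sum>i\<in>I. w i * (s i)\<^sup>2)"
    by (intro sum_mono mult_right_mono weight_ge) auto
  finally have "c * ((Q - 1) / (4 * \<theta>)) \<le> c * (\<Sum>i\<in>I. w i * (s i)\<^sup>2)"
    using \<open>0 \<le> c\<close> by (rule mult_left_mono)
  moreover have "0 \<le> D0 / 2 + c * ((Q - 1) / (4 * \<theta>))"
    using second_difference_bound_average_nonneg[OF \<open>0 < \<theta>\<close> Q_ge]
    unfolding D0_def c_def by simp
  ultimately have "0 \<le> D0 * sum w I + c * (\<Sum>i\<in>I. w i * (s i)\<^sup>2)"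
    unfolding weight_sum by linarith
  then have "0 \<le> Q powr -\<theta> * (D0 * sum w I + c * (\<Sum>i\<in>I. w i * (s i)\<^sup>2))"
    by simp
  also have "\<dots> = (\<Sum>i\<in>I. w i * (Q powr -\<theta> * (D0 + c * (s i)\<^sup>2)))"
    by (simp add: sum.distrib sum_distrib_left algebra_simps)
  also have "\<dots> \<le> (\<Sum>i\<in>I. w i * ?D i)"
    unfolding D0_def c_def using neighbours_pos \<open>0 < Q\<close> \<open>0 < \<theta>\<close>
    by (intro sum_mono mult_left_mono powr_neg_second_difference_ge w_nonneg) auto
  finally show ?thesis .
qed

lemma real_of_lattice_add: "real_of_lattice (x + y) = real_of_lattice x + real_of_lattice y"
  by (simp add: real_of_lattice_def vec_eq_iff)

lemma real_of_lattice_diff: "real_of_lattice (x - y) = real_of_lattice x - real_of_lattice y"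
  by (simp add: real_of_lattice_def vec_eq_iff)

lemma real_of_lattice_unit_vec: "real_of_lattice (unit_vec i) = axis i 1"
  by (simp add: real_of_lattice_def unit_vec_def axis_def vec_eq_iff)

lemma real_of_lattice_nth [simp]: "real_of_lattice x $ i = real_of_int (x $ i)"
  by (simp add: real_of_lattice_def)

lemma power2_norm_add_axis:
  fixes y :: "real ^ 'n::finite"
  shows "(norm (y + axis i 1))\<^sup>2 = (norm y)\<^sup>2 + 2 * y $ i + 1"
  by (simp add: power2_norm_eq_inner inner_add cart_eq_inner_axis inner_commute)

lemma power2_norm_diff_axis:
  fixes y :: "real ^ 'n::finite"
  shows "(norm (y - axis i 1))\<^sup>2 = (norm y)\<^sup>2 - 2 * y $ i + 1"
  by (simp add: power2_norm_eq_inner inner_diff cart_eq_inner_axis inner_commute)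

lemma power2_norm_vec_eq_sum:
  fixes y :: "real ^ 'n::finite"
  shows "(norm y)\<^sup>2 = (\<Sum>i\<in>UNIV. (y $ i)\<^sup>2)"
  unfolding power2_norm_eq_inner inner_vec_def by (simp add: power2_eq_square)

lemma trace_env_pos:
  assumes "\<And>i. 0 < \<omega> x i"
  shows "0 < trace_env \<omega> x"
  unfolding trace_env_def using assms by (intro sum_pos) auto

lemma L_op_weights_sum:
  assumes "\<And>i. 0 < \<omega> x i"
  shows "(\<Sum>i\<in>UNIV. \<omega> x i / (2 * trace_env \<omega> x)) = 1 / 2"
  using trace_env_pos[of \<omega> x, OF assms] by (simp add: trace_env_def flip: sum_divide_distrib)

lemma L_op_ge_neg_one:
  assumes "\<And>i. 0 < \<omega> x i" and "\<And>z. 0 \<le> u z" and "u x \<le> 1"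
  shows "- 1 \<le> L_op \<omega> u x"
proof -
  have "- 2 \<le> u (x + unit_vec i) + u (x - unit_vec i) - 2 * u x" for i
    using assms(2)[of "x + unit_vec i"] assms(2)[of "x - unit_vec i"] assms(3) by linarith
  then have "(\<Sum>i\<in>UNIV. \<omega> x i / (2 * trace_env \<omega> x) * (- 2)) \<le> L_op \<omega> u x"
    unfolding L_op_def using assms(1) trace_env_pos[of \<omega> x]
    by (intro sum_mono mult_left_mono) (auto simp: less_imp_le)
  moreover have "(\<Sum>i\<in>UNIV. \<omega> x i / (2 * trace_env \<omega> x) * (- 2)) = - 1"
    unfolding sum_distrib_right[symmetric] L_op_weights_sum[of \<omega> x, OF assms(1)] by simp
  ultimately show ?thesis
    by simp
qed

lemma L_op_radial:
  "L_op \<omega> (\<lambda>z. f ((norm (real_of_lattice z))\<^sup>2)) x =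
    (\<Sum>i\<in>UNIV. \<omega> x i / (2 * trace_env \<omega> x) *
      (f ((norm (real_of_lattice x))\<^sup>2 + 1 + 2 * real_of_int (x $ i)) + f ((norm (real_of_lattice x))\<^sup>2 + 1 - 2 * real_of_int (x $ i))
        - 2 * f ((norm (real_of_lattice x))\<^sup>2)))"
  unfolding L_op_def real_of_lattice_add real_of_lattice_diff real_of_lattice_unit_vec
    power2_norm_add_axis power2_norm_diff_axis
  by (simp add: algebra_simps)

lemma L_op_inverse_power_ge:
  fixes \<omega> :: "int ^ 'n::finite \<Rightarrow> 'n \<Rightarrow> real" and \<theta> :: real
  assumes "0 < \<theta>" and pos: "\<And>i. 0 < \<omega> x i"
    and elliptic: "\<And>i. 1 / (2 * \<theta>) \<le> \<omega> x i / trace_env \<omega> x"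
  shows "- indicator (ball_lattice (\<theta> + 3)) x
           \<le> L_op \<omega> (\<lambda>z. (1 + (norm (real_of_lattice z))\<^sup>2) powr -\<theta>) x"
proof (cases "x \<in> ball_lattice (\<theta> + 3)")
  case True
  have "1 \<le> (1 + (norm (real_of_lattice x))\<^sup>2) powr \<theta>"
    using \<open>0 < \<theta>\<close> by (intro ge_one_powr_ge_zero) auto
  then have "(1 + (norm (real_of_lattice x))\<^sup>2) powr -\<theta> \<le> 1"
    by (simp add: powr_minus_divide divide_le_eq_1)
  then show ?thesis
    using L_op_ge_neg_one[of \<omega> x, OF pos] True by simp
next
  case False
  define Q where "Q = 1 + (norm (real_of_lattice x))\<^sup>2"
  have "\<theta> + 3 \<le> norm (real_of_lattice x)"
    using False by (simp add: ball_lattice_def)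
  then have "(\<theta> + 3)\<^sup>2 \<le> (norm (real_of_lattice x))\<^sup>2"
    using \<open>0 < \<theta>\<close> by (intro power_mono) auto
  then have "(\<theta> + 3)\<^sup>2 \<le> Q"
    unfolding Q_def by linarith
  have "0 \<le> (\<Sum>i\<in>UNIV. \<omega> x i / (2 * trace_env \<omega> x) *
      ((Q + 1 + 2 * real_of_int (x $ i)) powr -\<theta> + (Q + 1 - 2 * real_of_int (x $ i)) powr -\<theta> - 2 * Q powr -\<theta>))"
  proof (rule weighted_second_differences_nonneg)
    show "1 / (4 * \<theta>) \<le> \<omega> x i / (2 * trace_env \<omega> x)" for i
      using elliptic[of i] by (simp add: field_simps)
    show "Q = 1 + (\<Sum>i\<in>UNIV. (real_of_int (x $ i))\<^sup>2)"
      by (simp add: Q_def power2_norm_vec_eq_sum)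
  qed (use \<open>0 < \<theta>\<close> \<open>(\<theta> + 3)\<^sup>2 \<le> Q\<close> L_op_weights_sum[of \<omega> x, OF pos] in auto)
  also have "\<dots> = L_op \<omega> (\<lambda>z. (1 + (norm (real_of_lattice z))\<^sup>2) powr -\<theta>) x"
  proof -
    have "1 + ((norm (real_of_lattice x))\<^sup>2 + 1 + 2 * t) = Q + 1 + 2 * t"
      "1 + ((norm (real_of_lattice x))\<^sup>2 + 1 - 2 * t) = Q + 1 - 2 * t" for t
      by (simp_all add: Q_def)
    then show ?thesis
      by (simp only: L_op_radial[where f = "\<lambda>q. (1 + q) powr -\<theta>"] Q_def[symmetric])
  qed
  finally show ?thesis
    using False by simp
qed

theorem lemma2p5:
  fixes \<kappa> :: real
  assumes "0 < \<kappa>" and "\<kappa> \<le> 1 / (2 * real CARD('n::finite))"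
  shows "\<exists>C0>0. \<forall>\<omega> :: int ^ 'n \<Rightarrow> 'n \<Rightarrow> real.
           (\<forall>x i. 0 < \<omega> x i) \<longrightarrow>
           (\<forall>x i. \<omega> x i / trace_env \<omega> x \<ge> 2 * \<kappa>) \<longrightarrow>
           (let \<theta> = 1 / (4 * \<kappa>);
                \<eta> = (\<lambda>y :: real ^ 'n. (1 + (norm y)\<^sup>2) powr (- \<theta>))
            in \<forall>x. L_op \<omega> (\<lambda>z. \<eta> (real_of_lattice z)) x
                   \<ge> - indicator (ball_lattice (C0 * \<theta>\<^sup>2)) x)"
proof -
  define \<theta> where "\<theta> = 1 / (4 * \<kappa>)"
  have "0 < \<theta>" and two_\<kappa>: "2 * \<kappa> = 1 / (2 * \<theta>)"
    using assms(1) by (simp_all add: \<theta>_def)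
  have radius: "(\<theta> + 3) / \<theta>\<^sup>2 * \<theta>\<^sup>2 = \<theta> + 3"
    using \<open>0 < \<theta>\<close> by simp
  show ?thesis
  proof (intro exI[of _ "(\<theta> + 3) / \<theta>\<^sup>2"] conjI allI impI)
    show "0 < (\<theta> + 3) / \<theta>\<^sup>2"
      using \<open>0 < \<theta>\<close> by simp
    fix \<omega> :: "int ^ 'n \<Rightarrow> 'n \<Rightarrow> real"
    assume "\<forall>x i. 0 < \<omega> x i" and "\<forall>x i. 2 * \<kappa> \<le> \<omega> x i / trace_env \<omega> x"
    then show "let \<theta>' = 1 / (4 * \<kappa>); \<eta> = \<lambda>y :: real ^ 'n. (1 + (norm y)\<^sup>2) powr - \<theta>'
      in \<forall>x. - indicator (ball_lattice ((\<theta> + 3) / \<theta>\<^sup>2 * \<theta>'\<^sup>2)) x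
               \<le> L_op \<omega> (\<lambda>z. \<eta> (real_of_lattice z)) x"
      unfolding Let_def \<theta>_def[symmetric] radius two_\<kappa>
      using L_op_inverse_power_ge[OF \<open>0 < \<theta>\<close>] by blast
  qed
qed

end
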